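(* Under the hypotheses and notation of the linearised solver without regularisation (with $L\ge L_\zeta/2$, $u^n$ the solution of the nonlinear discrete equation and $(u^{n,i})_{i\ge0}$ the iterates), let $e^{n,i}:=u^n-u^{n,i}$. Then for every $i\ge1$, $$2\|\Pi_{\mathcal D}e^{n,i}\|_{*,\mathcal D}^2+\delta t\,L\,\|\Pi_{\mathcal D}e^{n,i}\|^2\le \delta t\,L\,\|\Pi_{\mathcal D}e^{n,i-1}\|^2,$$ and consequently $2\sum_{i=1}^\infty\|\Pi_{\mathcal D}e^{n,i}\|_{*,\mathcal D}^2\le\delta t\,L\,\|\Pi_{\mathcal D}e^{n,0}\|^2$.
   Context: Setting: $\Theta\subset\mathbb{R}^d$ open bounded; gradient discretisation with piecewise constant reconstruction $(X_{\mathcal D},\Pi_{\mathcal D},\nabla_{\mathcal D})$: $X_{\mathcal D}$ finite-dimensional with basis indexed by a finite set $B$, $\Pi_{\mathcal D}v=\sum_{j\in B}v_j\mathbf 1_{\Theta_j}$ for disjoint measurable $\Theta_j\subset\Theta$, $\nabla_{\mathcal D}:X_{\mathcal D}\to L^2(\Theta)^d$ linear with $\|\nabla_{\mathcal D}\cdot\|$ a norm. For $g$ with $g(0)=0$, $g(v):=(g(v_j))_j$. $\zeta$ non-decreasing Lipschitz, $\zeta(0)=0$, $0\le\zeta'\le L_\zeta$ a.e.; $\delta t>0$; $r\in L^2(\Theta)$ fixed. $u^n\in X_{\mathcal D}$ satisfies $\langle\Pi_{\mathcal D}u^n,\Pi_{\mathcal D}\varphi\rangle+\delta t\langle\nabla_{\mathcal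 D}\zeta(u^n),\nabla_{\mathcal D}\varphi\rangle=\langle r,\Pi_{\mathcal D}\varphi\rangle$ for all $\varphi\in X_{\mathcal D}$; $u^{n,0}\in X_{\mathcal D}$ arbitrary and for $i\ge1$, $\langle\Pi_{\mathcal D}u^{n,i},\Pi_{\mathcal D}\varphi\rangle+\delta t L\langle\nabla_{\mathcal D}u^{n,i},\nabla_{\mathcal D}\varphi\rangle=\delta t\langle L\nabla_{\mathcal D}u^{n,i-1}-\nabla_{\mathcal D}\zeta(u^{n,i-1}),\nabla_{\mathcal D}\varphi\rangle+\langle r,\Pi_{\mathcal D}\varphi\rangle$ for all $\varphi$. $\|\cdot\|$ is the $L^2(\Theta)$ norm and $\|v\|_{*,\mathcal D}:=\sup\{\int_\Theta v\,\Pi_{\mathcal D}w: w\in X_{\mathcal D},\|\nabla_{\mathcal D}w\|=1\}$. *)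

theory Defs
  imports "HOL-Analysis.Analysis"
begin

definition L2_inner :: "('a::euclidean_space) set \<Rightarrow> ('a \<Rightarrow> real) \<Rightarrow> ('a \<Rightarrow> real) \<Rightarrow> real" where
  "L2_inner \<Theta> f g = (LINT x:\<Theta>|lebesgue. f x * g x)"

definition L2_norm :: "('a::euclidean_space) set \<Rightarrow> ('a \<Rightarrow> real) \<Rightarrow> real" where
  "L2_norm \<Theta> f = sqrt (L2_inner \<Theta> f f)"

definition L2_inner_vec :: "('a::euclidean_space) set \<Rightarrow> ('a \<Rightarrow> 'c::euclidean_space) \<Rightarrow> ('a \<Rightarrow> 'c) \<Rightarrow> real" where
  "L2_inner_vec \<Theta> F G = (LINT x:\<Theta>|lebesgue. F x \<bullet> G x)"

definition L2_norm_vec :: "('a::euclidean_space) set \<Rightarrow> ('a \<Rightarrow> 'c::euclidean_space) \<Rightarrow> real" where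
  "L2_norm_vec \<Theta> F = sqrt (L2_inner_vec \<Theta> F F)"

text \<open>Piecewise constant reconstruction: X_D is identified with 'b \<Rightarrow> real, where the
  finite type 'b indexes the basis (the set B); Pi_D v = sum_j v_j 1_{Theta_j}.\<close>

definition PiD :: "('b::finite \<Rightarrow> 'a set) \<Rightarrow> ('b \<Rightarrow> real) \<Rightarrow> 'a \<Rightarrow> real" where
  "PiD \<Theta>s v = (\<lambda>x. \<Sum>j\<in>UNIV. v j * indicator (\<Theta>s j) x)"

definition dual_norm :: "('a::euclidean_space) set \<Rightarrow> ('b::finite \<Rightarrow> 'a set)
    \<Rightarrow> (('b \<Rightarrow> real) \<Rightarrow> 'a \<Rightarrow> 'c::euclidean_space) \<Rightarrow> ('a \<Rightarrow> real) \<Rightarrow> real" where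
  "dual_norm \<Theta> \<Theta>s grad v =
     Sup {L2_inner \<Theta> v (PiD \<Theta>s w) | w. L2_norm_vec \<Theta> (grad w) = 1}"

end

theory Submission
  imports Defs
begin

(*
  Subtracting the i-th linearised step from the nonlinear scheme shows that the error
  e = u - u^{n,i} is represented in the energy inner product by an explicit element of X_D:
  <Pi e, Pi phi> = <grad z, grad phi> for all phi, where
  z = dt (L e^{i-1} - (zeta(u) - zeta(u^{n,i-1})) - L e^i).
  Hence no abstract Riesz argument is needed: Cauchy-Schwarz gives
  ||Pi e||_*^2 <= ||grad z||^2 = <Pi e, Pi z>.
  Monotonicity and L_zeta-Lipschitz continuity of zeta with L_zeta <= 2L give
  |L (a - b) - (zeta a - zeta b)| <= L |a - b|, so a cellwise Young inequality bounds
  2 <Pi e, Pi z> by dt L (||Pi e^{i-1}||^2 - ||Pi e^i||^2); the series bound follows by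
  telescoping.
*)

lemma PiD_apply_in:
  assumes "x \<in> \<Theta>s k" and "\<And>j. j \<noteq> k \<Longrightarrow> \<Theta>s j \<inter> \<Theta>s k = {}"
  shows "PiD \<Theta>s v x = v k"
proof -
  have "PiD \<Theta>s v x = (\<Sum>j\<in>UNIV. if j = k then v j else 0)"
    unfolding PiD_def using assms by (intro sum.cong) (auto simp: indicator_def)
  then show ?thesis by simp
qed

lemma PiD_apply_outside:
  assumes "\<And>j. x \<notin> \<Theta>s j"
  shows "PiD \<Theta>s v x = 0"
  using assms by (simp add: PiD_def)

lemma L2_inner_PiD:
  fixes \<Theta>s :: "'b::finite \<Rightarrow> 'a::euclidean_space set"
  assumes meas: "\<And>j. \<Theta>s j \<in> fmeasurable lebesgue" and sub: "\<And>j. \<Theta>s j \<subseteq> \<Theta>"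
    and disj: "\<And>j k. j \<noteq> k \<Longrightarrow> \<Theta>s j \<inter> \<Theta>s k = {}"
  shows "L2_inner \<Theta> (PiD \<Theta>s a) (PiD \<Theta>s b) = (\<Sum>j\<in>UNIV. a j * b j * measure lebesgue (\<Theta>s j))"
proof -
  have pointwise: "indicator \<Theta> x *\<^sub>R (PiD \<Theta>s a x * PiD \<Theta>s b x)
      = (\<Sum>j\<in>UNIV. a j * b j * indicator (\<Theta>s j) x)" for x
  proof (cases "\<exists>k. x \<in> \<Theta>s k")
    case True
    then obtain k where k: "x \<in> \<Theta>s k" by blast
    with disj have "x \<in> \<Theta>s j \<longleftrightarrow> j = k" for j by blast
    with k sub show ?thesis
      by (simp add: PiD_apply_in disj indicator_def subset_iff if_distrib cong: if_cong)
  next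
    case False
    then show ?thesis by (simp add: PiD_apply_outside)
  qed
  have "integrable lebesgue (indicat_real (\<Theta>s j))" for j
    using meas[of j] by (intro integrable_real_indicator) (auto simp: fmeasurable_def)
  then show ?thesis
    unfolding L2_inner_def set_lebesgue_integral_def pointwise
    using meas by (subst Bochner_Integration.integral_sum) auto
qed

lemma set_integrable_inner:
  fixes F G :: "'a \<Rightarrow> 'c::euclidean_space"
  assumes "A \<in> sets M" and [measurable]: "F \<in> borel_measurable M" "G \<in> borel_measurable M"
    and "set_integrable M A (\<lambda>x. (norm (F x))\<^sup>2)" "set_integrable M A (\<lambda>x. (norm (G x))\<^sup>2)"
  shows "set_integrable M A (\<lambda>x. F x \<bullet> G x)"
proof (rule set_integrable_bound)
  show "set_integrable M A (\<lambda>x. (norm (F x))\<^sup>2 + (norm (G x))\<^sup>2)"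
    using assms(4,5) by (rule set_integral_add)
  show "set_borel_measurable M A (\<lambda>x. F x \<bullet> G x)"
    using \<open>A \<in> sets M\<close> unfolding set_borel_measurable_def by measurable
  have "\<bar>F x \<bullet> G x\<bar> \<le> (norm (F x))\<^sup>2 + (norm (G x))\<^sup>2" for x
    using Cauchy_Schwarz_ineq2[of "F x" "G x"] sum_squares_bound[of "norm (F x)" "norm (G x)"]
    by linarith
  then show "AE x\<in>A in M. norm (F x \<bullet> G x) \<le> norm ((norm (F x))\<^sup>2 + (norm (G x))\<^sup>2)"
    by simp
qed

lemma L2_inner_vec_scaleR_left: "L2_inner_vec \<Theta> (\<lambda>x. c *\<^sub>R F x) G = c * L2_inner_vec \<Theta> F G"
  by (simp add: L2_inner_vec_def)

lemma L2_inner_vec_nonneg: "0 \<le> L2_inner_vec \<Theta> F F"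
  unfolding L2_inner_vec_def set_lebesgue_integral_def
  by (rule Bochner_Integration.integral_nonneg) simp

lemma le_mult_of_quadratic_nonneg:
  fixes a b c :: real
  assumes "0 \<le> c" and "\<And>t. 0 \<le> a - 2 * t * b + t\<^sup>2 * c"
  shows "b\<^sup>2 \<le> a * c"
proof (cases "c = 0")
  case True
  have "b = 0"
  proof (rule ccontr)
    assume "b \<noteq> 0"
    then show False using assms(2)[of "(a + 1) / (2 * b)"] True by simp
  qed
  then show ?thesis using assms(2)[of 0] True by simp
next
  case False
  then have "0 < c" using assms(1) by simp
  then show ?thesis using assms(2)[of "b / c"] by (simp add: field_simps power2_eq_square)
qed

lemma L2_inner_vec_Cauchy_Schwarz:
  fixes F G :: "'a::euclidean_space \<Rightarrow> 'c::euclidean_space"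
  assumes "\<Theta> \<in> sets lebesgue" "F \<in> borel_measurable lebesgue" "G \<in> borel_measurable lebesgue"
    and "set_integrable lebesgue \<Theta> (\<lambda>x. (norm (F x))\<^sup>2)" "set_integrable lebesgue \<Theta> (\<lambda>x. (norm (G x))\<^sup>2)"
  shows "(L2_inner_vec \<Theta> F G)\<^sup>2 \<le> L2_inner_vec \<Theta> F F * L2_inner_vec \<Theta> G G"
proof (rule le_mult_of_quadratic_nonneg)
  show "0 \<le> L2_inner_vec \<Theta> G G" by (rule L2_inner_vec_nonneg)
  fix t :: real
  have "set_integrable lebesgue \<Theta> (\<lambda>x. F x \<bullet> F x)"
    and "set_integrable lebesgue \<Theta> (\<lambda>x. F x \<bullet> G x)"
    and "set_integrable lebesgue \<Theta> (\<lambda>x. G x \<bullet> G x)"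
    using assms by (auto intro: set_integrable_inner)
  moreover have "(F x - t *\<^sub>R G x) \<bullet> (F x - t *\<^sub>R G x)
      = F x \<bullet> F x - 2 * t * (F x \<bullet> G x) + t\<^sup>2 * (G x \<bullet> G x)" for x
    by (simp add: inner_commute power2_eq_square algebra_simps)
  ultimately have "L2_inner_vec \<Theta> (\<lambda>x. F x - t *\<^sub>R G x) (\<lambda>x. F x - t *\<^sub>R G x)
      = L2_inner_vec \<Theta> F F - 2 * t * L2_inner_vec \<Theta> F G + t\<^sup>2 * L2_inner_vec \<Theta> G G"
    unfolding L2_inner_vec_def by simp
  then show "0 \<le> L2_inner_vec \<Theta> F F - 2 * t * L2_inner_vec \<Theta> F G + t\<^sup>2 * L2_inner_vec \<Theta> G G"
    using L2_inner_vec_nonneg by metis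
qed

lemma relaxed_increment_abs_le:
  fixes \<zeta> :: "real \<Rightarrow> real"
  assumes mono: "mono \<zeta>" and lip: "L\<zeta>-lipschitz_on UNIV \<zeta>" and L: "L\<zeta> \<le> 2 * L"
  shows "\<bar>L * (a - b) - (\<zeta> a - \<zeta> b)\<bar> \<le> L * \<bar>a - b\<bar>"
proof -
  have ordered: "\<bar>L * (x - y) - (\<zeta> x - \<zeta> y)\<bar> \<le> L * (x - y)" if "y \<le> x" for x y
  proof -
    have "0 \<le> \<zeta> x - \<zeta> y"
      using monoD[OF mono that] by simp
    moreover have "\<zeta> x - \<zeta> y \<le> L\<zeta> * (x - y)"
      using lipschitz_onD[OF lip, of x y] that by (simp add: dist_real_def)
    moreover have "L\<zeta> * (x - y) \<le> 2 * L * (x - y)"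
      using L that by (simp add: mult_right_mono)
    ultimately show ?thesis
      by (simp add: abs_le_iff)
  qed
  show ?thesis
  proof (cases "b \<le> a")
    case True
    then show ?thesis using ordered[of b a] by simp
  next
    case False
    then have "\<bar>L * (b - a) - (\<zeta> b - \<zeta> a)\<bar> \<le> L * (b - a)"
      by (intro ordered) simp
    then show ?thesis using False by (simp add: abs_minus_commute algebra_simps)
  qed
qed

lemma relaxed_increment_bound:
  fixes \<zeta> :: "real \<Rightarrow> real"
  assumes "mono \<zeta>" and lip: "L\<zeta>-lipschitz_on UNIV \<zeta>" and L: "L\<zeta> \<le> 2 * L"
  shows "2 * p * (L * (a - b) - (\<zeta> a - \<zeta> b)) \<le> L * p\<^sup>2 + L * (a - b)\<^sup>2"
proof -
  have "0 \<le> L"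
    using lipschitz_on_nonneg[OF lip] L by simp
  have "2 * p * (L * (a - b) - (\<zeta> a - \<zeta> b)) \<le> 2 * \<bar>p\<bar> * \<bar>L * (a - b) - (\<zeta> a - \<zeta> b)\<bar>"
    by (simp add: abs_mult[symmetric])
  also have "\<dots> \<le> 2 * \<bar>p\<bar> * (L * \<bar>a - b\<bar>)"
    using relaxed_increment_abs_le[OF assms] by (simp add: mult_left_mono)
  also have "\<dots> = L * (2 * \<bar>p\<bar> * \<bar>a - b\<bar>)"
    by simp
  also have "\<dots> \<le> L * (p\<^sup>2 + (a - b)\<^sup>2)"
    using \<open>0 \<le> L\<close> sum_squares_bound[of "\<bar>p\<bar>" "\<bar>a - b\<bar>"] by (simp add: mult_left_mono)
  finally show ?thesis
    by (simp add: algebra_simps)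
qed

lemma summable_telescoping_le:
  fixes a b :: "nat \<Rightarrow> real"
  assumes step: "\<And>i. a i + b (Suc i) \<le> b i" and "\<And>i. 0 \<le> a i" and "\<And>i. 0 \<le> b i"
  shows "summable a \<and> suminf a \<le> b 0"
proof -
  have partial: "(\<Sum>k<n. a k) + b n \<le> b 0" for n
  proof (induction n)
    case (Suc n)
    then show ?case using step[of n] by simp
  qed simp
  have bound: "(\<Sum>k<n. a k) \<le> b 0" for n
    using partial[of n] assms(3)[of n] by linarith
  have "summable a"
    using assms(2) bound[of "Suc _"] by (intro bounded_imp_summable) (auto simp: lessThan_Suc_atMost)
  then show ?thesis
    using bound suminf_le_const by blast
qed

locale gradient_discretisation =
  fixes \<Theta> :: "'a::euclidean_space set"
    and \<Theta>s :: "'b::finite \<Rightarrow> 'a set"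
    and grad :: "('b \<Rightarrow> real) \<Rightarrow> 'a \<Rightarrow> 'c::euclidean_space"
  assumes \<Theta>_open: "open \<Theta>" and \<Theta>_bounded: "bounded \<Theta>"
    and \<Theta>s_meas: "\<And>j. \<Theta>s j \<in> sets lebesgue"
    and \<Theta>s_sub: "\<And>j. \<Theta>s j \<subseteq> \<Theta>"
    and \<Theta>s_disj: "\<And>j k. j \<noteq> k \<Longrightarrow> \<Theta>s j \<inter> \<Theta>s k = {}"
    and grad_linear: "\<And>a b v w. grad (\<lambda>j. a * v j + b * w j) = (\<lambda>x. a *\<^sub>R grad v x + b *\<^sub>R grad w x)"
    and grad_meas: "\<And>v. grad v \<in> borel_measurable lebesgue"
    and grad_L2: "\<And>v. set_integrable lebesgue \<Theta> (\<lambda>x. (norm (grad v x))\<^sup>2)"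
    and grad_norm: "\<And>v. L2_norm_vec \<Theta> (grad v) = 0 \<Longrightarrow> v = (\<lambda>j. 0)"
begin

abbreviation cell_measure :: "'b \<Rightarrow> real" where
  "cell_measure j \<equiv> measure lebesgue (\<Theta>s j)"

abbreviation grad_inner :: "('b \<Rightarrow> real) \<Rightarrow> ('b \<Rightarrow> real) \<Rightarrow> real" where
  "grad_inner v w \<equiv> L2_inner_vec \<Theta> (grad v) (grad w)"

lemma \<Theta>_sets: "\<Theta> \<in> sets lebesgue"
  using \<Theta>_open by simp

lemma inner_PiD: "L2_inner \<Theta> (PiD \<Theta>s a) (PiD \<Theta>s b) = (\<Sum>j\<in>UNIV. a j * b j * cell_measure j)"
proof (rule L2_inner_PiD)
  show "\<Theta>s j \<in> fmeasurable lebesgue" for j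
    using bounded_set_imp_lmeasurable[OF bounded_subset[OF \<Theta>_bounded \<Theta>s_sub] \<Theta>s_meas] .
qed (fact \<Theta>s_sub \<Theta>s_disj)+

lemma L2_norm_PiD_sq: "(L2_norm \<Theta> (PiD \<Theta>s v))\<^sup>2 = (\<Sum>j\<in>UNIV. (v j)\<^sup>2 * cell_measure j)"
proof -
  have "0 \<le> (\<Sum>j\<in>UNIV. (v j)\<^sup>2 * cell_measure j)"
    by (intro sum_nonneg) simp
  then show ?thesis
    unfolding L2_norm_def inner_PiD by (simp add: power2_eq_square)
qed

lemma grad_diff: "grad (\<lambda>j. v j - w j) = (\<lambda>x. grad v x - grad w x)"
  using grad_linear[of 1 v "-1" w] by simp

lemma grad_scale: "grad (\<lambda>j. c * v j) = (\<lambda>x. c *\<^sub>R grad v x)"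
  using grad_linear[of c v 0 v] by simp

lemma set_integrable_grad_inner: "set_integrable lebesgue \<Theta> (\<lambda>x. grad v x \<bullet> grad w x)"
  using \<Theta>_sets by (intro set_integrable_inner grad_meas grad_L2)

lemma grad_inner_diff_left: "grad_inner (\<lambda>j. v j - w j) p = grad_inner v p - grad_inner w p"
  unfolding grad_diff L2_inner_vec_def
  by (simp add: inner_diff_left set_integrable_grad_inner)

lemma grad_inner_scale_left: "grad_inner (\<lambda>j. c * v j) p = c * grad_inner v p"
  unfolding grad_scale by (rule L2_inner_vec_scaleR_left)

lemma L2_norm_vec_grad_scale: "L2_norm_vec \<Theta> (grad (\<lambda>j. c * v j)) = \<bar>c\<bar> * L2_norm_vec \<Theta> (grad v)"
  unfolding grad_scale L2_norm_vec_def L2_inner_vec_scaleR_left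
  by (simp add: L2_inner_vec_def real_sqrt_mult)

lemma exists_grad_unit: "\<exists>w. L2_norm_vec \<Theta> (grad w) = 1"
proof -
  define n where "n = L2_norm_vec \<Theta> (grad (\<lambda>_. 1))"
  have "n \<noteq> 0"
    using grad_norm[of "\<lambda>_. 1"] by (auto simp: n_def fun_eq_iff)
  moreover have "0 \<le> n"
    by (simp add: n_def L2_norm_vec_def L2_inner_vec_nonneg)
  ultimately have "L2_norm_vec \<Theta> (grad (\<lambda>_. (1 / n) * 1)) = 1"
    unfolding L2_norm_vec_grad_scale n_def[symmetric] by simp
  then show ?thesis by blast
qed

lemma dual_norm_sq_le:
  assumes repr: "\<And>\<phi>. L2_inner \<Theta> f (PiD \<Theta>s \<phi>) = L2_inner_vec \<Theta> Z (grad \<phi>)"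
    and Z_meas: "Z \<in> borel_measurable lebesgue"
    and Z_L2: "set_integrable lebesgue \<Theta> (\<lambda>x. (norm (Z x))\<^sup>2)"
  shows "(dual_norm \<Theta> \<Theta>s grad f)\<^sup>2 \<le> L2_inner_vec \<Theta> Z Z"
proof -
  define S where "S = {L2_inner \<Theta> f (PiD \<Theta>s w) | w. L2_norm_vec \<Theta> (grad w) = 1}"
  have "S \<noteq> {}"
    using exists_grad_unit unfolding S_def by blast
  moreover have "\<bar>x\<bar> \<le> sqrt (L2_inner_vec \<Theta> Z Z)" if "x \<in> S" for x
  proof -
    from that obtain w where x: "x = L2_inner_vec \<Theta> Z (grad w)" and w: "grad_inner w w = 1"
      unfolding S_def repr L2_norm_vec_def by auto
    have "x\<^sup>2 \<le> L2_inner_vec \<Theta> Z Z"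
      using L2_inner_vec_Cauchy_Schwarz[OF \<Theta>_sets Z_meas grad_meas Z_L2 grad_L2, of w] x w by simp
    then show ?thesis
      using real_sqrt_le_mono real_sqrt_abs by metis
  qed
  ultimately have "\<bar>dual_norm \<Theta> \<Theta>s grad f\<bar> \<le> sqrt (L2_inner_vec \<Theta> Z Z)"
    unfolding dual_norm_def S_def[symmetric] by (rule cSup_abs_le)
  then show ?thesis
    by (metis real_sqrt_abs real_sqrt_le_iff)
qed

context
  fixes \<zeta> :: "real \<Rightarrow> real" and r :: "'a \<Rightarrow> real" and u v v' :: "'b \<Rightarrow> real" and L \<delta>t :: real
  assumes u_sol: "\<And>\<phi>. L2_inner \<Theta> (PiD \<Theta>s u) (PiD \<Theta>s \<phi>) + \<delta>t * grad_inner (\<lambda>j. \<zeta> (u j)) \<phi>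
                  = L2_inner \<Theta> r (PiD \<Theta>s \<phi>)"
    and v'_sol: "\<And>\<phi>. L2_inner \<Theta> (PiD \<Theta>s v') (PiD \<Theta>s \<phi>) + \<delta>t * L * grad_inner v' \<phi>
                  = \<delta>t * L2_inner_vec \<Theta> (\<lambda>x. L *\<^sub>R grad v x - grad (\<lambda>j. \<zeta> (v j)) x) (grad \<phi>)
                    + L2_inner \<Theta> r (PiD \<Theta>s \<phi>)"
begin

lemma linearised_iteration_error_repr:
  "L2_inner \<Theta> (PiD \<Theta>s (\<lambda>j. u j - v' j)) (PiD \<Theta>s \<phi>)
     = grad_inner (\<lambda>j. \<delta>t * (L * (u j - v j) - (\<zeta> (u j) - \<zeta> (v j)) - L * (u j - v' j))) \<phi>"
proof -
  have "L2_inner_vec \<Theta> (\<lambda>x. L *\<^sub>R grad v x - grad (\<lambda>j. \<zeta> (v j)) x) (grad \<phi>)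
      = grad_inner (\<lambda>j. L * v j - \<zeta> (v j)) \<phi>"
    by (simp only: grad_diff grad_scale)
  also have "\<dots> = L * grad_inner v \<phi> - grad_inner (\<lambda>j. \<zeta> (v j)) \<phi>"
    by (simp only: grad_inner_diff_left grad_inner_scale_left)
  finally have relaxed: "L2_inner_vec \<Theta> (\<lambda>x. L *\<^sub>R grad v x - grad (\<lambda>j. \<zeta> (v j)) x) (grad \<phi>)
      = L * grad_inner v \<phi> - grad_inner (\<lambda>j. \<zeta> (v j)) \<phi>" .
  have z: "grad_inner (\<lambda>j. \<delta>t * (L * (u j - v j) - (\<zeta> (u j) - \<zeta> (v j)) - L * (u j - v' j))) \<phi>
      = \<delta>t * (L * (grad_inner u \<phi> - grad_inner v \<phi>)
          - (grad_inner (\<lambda>j. \<zeta> (u j)) \<phi> - grad_inner (\<lambda>j. \<zeta> (v j)) \<phi>)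
          - L * (grad_inner u \<phi> - grad_inner v' \<phi>))"
    by (simp only: grad_inner_diff_left grad_inner_scale_left)
  have e: "L2_inner \<Theta> (PiD \<Theta>s (\<lambda>j. u j - v' j)) (PiD \<Theta>s \<phi>)
      = L2_inner \<Theta> (PiD \<Theta>s u) (PiD \<Theta>s \<phi>) - L2_inner \<Theta> (PiD \<Theta>s v') (PiD \<Theta>s \<phi>)"
    by (simp add: inner_PiD sum_subtractf[symmetric] algebra_simps)
  show ?thesis
    unfolding e z using u_sol[of \<phi>] v'_sol[of \<phi>] relaxed by (simp add: algebra_simps)
qed

lemma linearised_iteration_error_step:
  assumes mono: "mono \<zeta>" and lip: "L\<zeta>-lipschitz_on UNIV \<zeta>" and L: "L\<zeta> \<le> 2 * L"
    and \<delta>t: "0 < \<delta>t"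
  shows "2 * (dual_norm \<Theta> \<Theta>s grad (PiD \<Theta>s (\<lambda>j. u j - v' j)))\<^sup>2
           + \<delta>t * L * (L2_norm \<Theta> (PiD \<Theta>s (\<lambda>j. u j - v' j)))\<^sup>2
         \<le> \<delta>t * L * (L2_norm \<Theta> (PiD \<Theta>s (\<lambda>j. u j - v j)))\<^sup>2"
proof -
  define e where "e = (\<lambda>j. u j - v' j)"
  define e' where "e' = (\<lambda>j. u j - v j)"
  define z where "z = (\<lambda>j. \<delta>t * (L * e' j - (\<zeta> (u j) - \<zeta> (v j)) - L * e j))"
  have repr: "L2_inner \<Theta> (PiD \<Theta>s e) (PiD \<Theta>s \<phi>) = grad_inner z \<phi>" for \<phi>
    unfolding e_def e'_def z_def by (rule linearised_iteration_error_repr)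
  have pointwise: "2 * (e j * (L * e' j - (\<zeta> (u j) - \<zeta> (v j)) - L * e j)) \<le> L * (e' j)\<^sup>2 - L * (e j)\<^sup>2" for j
    using relaxed_increment_bound[OF mono lip L, of "e j" "u j" "v j"]
    by (simp add: e'_def power2_eq_square algebra_simps)
  have "2 * (dual_norm \<Theta> \<Theta>s grad (PiD \<Theta>s e))\<^sup>2 \<le> 2 * grad_inner z z"
    using dual_norm_sq_le[OF repr grad_meas grad_L2] by simp
  also have "\<dots> = \<delta>t * (\<Sum>j\<in>UNIV. 2 * (e j * (L * e' j - (\<zeta> (u j) - \<zeta> (v j)) - L * e j)) * cell_measure j)"
    unfolding repr[of z, symmetric] inner_PiD by (simp add: z_def sum_distrib_left algebra_simps)
  also have "\<dots> \<le> \<delta>t * (\<Sum>j\<in>UNIV. (L * (e' j)\<^sup>2 - L * (e j)\<^sup>2) * cell_measure j)"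
    using \<delta>t pointwise by (intro mult_left_mono sum_mono mult_right_mono) auto
  finally show ?thesis
    unfolding e_def[symmetric] e'_def[symmetric] L2_norm_PiD_sq
    by (simp add: sum_subtractf sum_distrib_left algebra_simps)
qed

end

end

theorem mainTheorem2:
  fixes \<Theta> :: "(real^'d) set"
    and \<Theta>s :: "'b::finite \<Rightarrow> (real^'d) set"
    and grad :: "('b \<Rightarrow> real) \<Rightarrow> real^'d \<Rightarrow> real^'d"
    and \<zeta> :: "real \<Rightarrow> real"
    and L\<zeta> L \<delta>t :: real
    and r :: "real^'d \<Rightarrow> real"
    and u :: "'b \<Rightarrow> real"
    and U :: "nat \<Rightarrow> 'b \<Rightarrow> real"
  assumes \<Theta>_open: "open \<Theta>" and \<Theta>_bounded: "bounded \<Theta>"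
    and \<Theta>s_meas: "\<And>j. \<Theta>s j \<in> sets lebesgue"
    and \<Theta>s_sub: "\<And>j. \<Theta>s j \<subseteq> \<Theta>"
    and \<Theta>s_disj: "\<And>j k. j \<noteq> k \<Longrightarrow> \<Theta>s j \<inter> \<Theta>s k = {}"
    and grad_linear: "\<And>a b v w. grad (\<lambda>j. a * v j + b * w j) = (\<lambda>x. a *\<^sub>R grad v x + b *\<^sub>R grad w x)"
    and grad_meas: "\<And>v. grad v \<in> borel_measurable lebesgue"
    and grad_L2: "\<And>v. set_integrable lebesgue \<Theta> (\<lambda>x. (norm (grad v x))\<^sup>2)"
    and grad_norm: "\<And>v. L2_norm_vec \<Theta> (grad v) = 0 \<Longrightarrow> v = (\<lambda>j. 0)"
    and \<zeta>_mono: "mono \<zeta>" and \<zeta>_0: "\<zeta> 0 = 0"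
    and \<zeta>_lip: "L\<zeta>-lipschitz_on UNIV \<zeta>"
    and \<zeta>_deriv: "AE x in lborel. \<exists>D. (\<zeta> has_real_derivative D) (at x) \<and> 0 \<le> D \<and> D \<le> L\<zeta>"
    and \<delta>t_pos: "\<delta>t > 0"
    and r_meas: "r \<in> borel_measurable lebesgue"
    and r_L2: "set_integrable lebesgue \<Theta> (\<lambda>x. (r x)\<^sup>2)"
    and L_ge: "L \<ge> L\<zeta> / 2"
    and u_sol: "\<And>\<phi>. L2_inner \<Theta> (PiD \<Theta>s u) (PiD \<Theta>s \<phi>)
                  + \<delta>t * L2_inner_vec \<Theta> (grad (\<lambda>j. \<zeta> (u j))) (grad \<phi>)
                = L2_inner \<Theta> r (PiD \<Theta>s \<phi>)"
    and U_iter: "\<And>i \<phi>. i \<ge> 1 \<Longrightarrow>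
                  L2_inner \<Theta> (PiD \<Theta>s (U i)) (PiD \<Theta>s \<phi>)
                  + \<delta>t * L * L2_inner_vec \<Theta> (grad (U i)) (grad \<phi>)
                = \<delta>t * L2_inner_vec \<Theta>
                     (\<lambda>x. L *\<^sub>R grad (U (i - 1)) x - grad (\<lambda>j. \<zeta> (U (i - 1) j)) x) (grad \<phi>)
                  + L2_inner \<Theta> r (PiD \<Theta>s \<phi>)"
  defines "e \<equiv> (\<lambda>i j. u j - U i j)"
  shows "(\<forall>i\<ge>1. 2 * (dual_norm \<Theta> \<Theta>s grad (PiD \<Theta>s (e i)))\<^sup>2
                  + \<delta>t * L * (L2_norm \<Theta> (PiD \<Theta>s (e i)))\<^sup>2
                \<le> \<delta>t * L * (L2_norm \<Theta> (PiD \<Theta>s (e (i - 1))))\<^sup>2)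
       \<and> summable (\<lambda>i. (dual_norm \<Theta> \<Theta>s grad (PiD \<Theta>s (e (Suc i))))\<^sup>2)
       \<and> 2 * (\<Sum>i. (dual_norm \<Theta> \<Theta>s grad (PiD \<Theta>s (e (Suc i))))\<^sup>2)
           \<le> \<delta>t * L * (L2_norm \<Theta> (PiD \<Theta>s (e 0)))\<^sup>2"
proof -
  interpret gradient_discretisation \<Theta> \<Theta>s grad
    using \<Theta>_open \<Theta>_bounded \<Theta>s_meas \<Theta>s_sub \<Theta>s_disj grad_linear grad_meas grad_L2 grad_norm
    by unfold_locales
  have L: "L\<zeta> \<le> 2 * L" and "0 \<le> L"
    using L_ge lipschitz_on_nonneg[OF \<zeta>_lip] by auto
  have step: "2 * (dual_norm \<Theta> \<Theta>s grad (PiD \<Theta>s (e i)))\<^sup>2 + \<delta>t * L * (L2_norm \<Theta> (PiD \<Theta>s (e i)))\<^sup>2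
      \<le> \<delta>t * L * (L2_norm \<Theta> (PiD \<Theta>s (e (i - 1))))\<^sup>2" if "i \<ge> 1" for i
    unfolding e_def
    by (rule linearised_iteration_error_step[OF u_sol U_iter[OF that] \<zeta>_mono \<zeta>_lip L \<delta>t_pos])
  have "summable (\<lambda>i. 2 * (dual_norm \<Theta> \<Theta>s grad (PiD \<Theta>s (e (Suc i))))\<^sup>2)
      \<and> (\<Sum>i. 2 * (dual_norm \<Theta> \<Theta>s grad (PiD \<Theta>s (e (Suc i))))\<^sup>2)
          \<le> \<delta>t * L * (L2_norm \<Theta> (PiD \<Theta>s (e 0)))\<^sup>2"
    using step[of "Suc _"] \<delta>t_pos \<open>0 \<le> L\<close> by (intro summable_telescoping_le) auto
  then show ?thesis
    using step by (auto simp: suminf_mult)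
qed

end
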